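(* Let $J\ge1$ be an integer. Let $(X^{(0)},Y,Z)$ have joint density $p(z)p(x\mid z)p(y\mid x,z)$, and conditionally on $(X^{(0)},Y,Z)$ let $X^{(1)},\dots,X^{(J)}$ be i.i.d. with density $p(x\mid Z)$. Then for every measurable $f:\mathcal X\times\mathcal Y\times\mathcal Z\to[0,1]$, $$2\left(1-\mathbb E\left[1-f(X^{(0)},Y,Z)+\frac1J\sum_{j=1}^J f(X^{(j)},Y,Z)\right]\right)\le\int\big|p(y\mid x,z)-p(y\mid z)\big|\,p(x\mid z)\,p(z)\,dx\,dy\,dz,$$ where $p(y\mid z)=\int p(y\mid x,z)p(x\mid z)\,dx$.
   Context: $\mathcal X,\mathcal Y,\mathcal Z$ are the spaces in which $X,Y,Z$ take values; densities are with respect to dominating measures (integrals over discrete spaces are sums). *)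

theory Defs
  imports "HOL-Probability.Probability"
begin

definition marg_y_given_z ::
  "'x measure \<Rightarrow> ('z \<Rightarrow> 'x \<Rightarrow> real) \<Rightarrow> ('x \<Rightarrow> 'z \<Rightarrow> 'y \<Rightarrow> real) \<Rightarrow> 'z \<Rightarrow> 'y \<Rightarrow> real"
  where "marg_y_given_z MX px py z y = (\<integral>x. py x z y * px z x \<partial>MX)"

end

theory Submission
  imports Defs
begin

(* Integrating the joint density over the resamples shows that (X0, Y, Z) has density
   p = p(z) p(x|z) p(y|x,z); integrating it further over X0 shows that every resampled triple
   (Xj, Y, Z) has density q = p(z) p(x|z) p(y|z), since Xj is independent of Y given Z.
   Hence the expectation on the left is 1 - int f p + int f q, and integrating the pointwise bound
   2 f (p - q) <= |p - q| + (p - q), valid for 0 <= f <= 1, gives 2 (int f p - int f q) <= int |p - q|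
   because p and q both have mass 1. *)

lemma distributedI_nn_integral:
  assumes X: "X \<in> measurable M N" and f: "f \<in> borel_measurable N"
    and eq: "\<And>g. g \<in> borel_measurable N \<Longrightarrow> (\<integral>\<^sup>+\<omega>. g (X \<omega>) \<partial>M) = (\<integral>\<^sup>+x. f x * g x \<partial>N)"
  shows "distributed M N X f"
  unfolding distributed_def
proof (intro conjI X f measure_eqI)
  fix A assume A: "A \<in> sets (distr M N X)"
  then have "emeasure (distr M N X) A = (\<integral>\<^sup>+\<omega>. indicator A (X \<omega>) \<partial>M)"
    using X by (simp add: nn_integral_distr flip: nn_integral_indicator)
  also have "\<dots> = emeasure (density N f) A"
    using A eq[of "indicator A"] f by (simp add: emeasure_density)
  finally show "emeasure (distr M N X) A = emeasure (density N f) A" .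
qed simp

lemma nn_integral_PiM_prod_density:
  fixes q :: "'x \<Rightarrow> ennreal"
  assumes "sigma_finite_measure MX" "finite I"
    and "q \<in> borel_measurable MX" "(\<integral>\<^sup>+x. q x \<partial>MX) = 1"
  shows "(\<integral>\<^sup>+xs. (\<Prod>i\<in>I. q (xs i)) \<partial>Pi\<^sub>M I (\<lambda>_. MX)) = 1"
proof -
  interpret product_sigma_finite "\<lambda>_. MX"
    by (simp add: product_sigma_finite_def assms(1))
  show ?thesis
    using assms by (subst product_nn_integral_prod) auto
qed

lemma nn_integral_PiM_prod_density_component:
  fixes q g :: "'x \<Rightarrow> ennreal"
  assumes "sigma_finite_measure MX" "finite I" "j \<in> I"
    and q: "q \<in> borel_measurable MX" "(\<integral>\<^sup>+x. q x \<partial>MX) = 1"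
    and g: "g \<in> borel_measurable MX"
  shows "(\<integral>\<^sup>+xs. (\<Prod>i\<in>I. q (xs i)) * g (xs j) \<partial>Pi\<^sub>M I (\<lambda>_. MX)) = (\<integral>\<^sup>+x. q x * g x \<partial>MX)"
proof -
  interpret product_sigma_finite "\<lambda>_. MX"
    by (simp add: product_sigma_finite_def assms(1))
  define h where "h i = (if i = j then (\<lambda>x. q x * g x) else q)" for i
  have "(\<Prod>i\<in>I. h i (xs i)) = q (xs j) * g (xs j) * (\<Prod>i\<in>I - {j}. q (xs i))" for xs
    using assms(2,3) by (simp add: prod.remove[of I j] h_def)
  moreover have "(\<Prod>i\<in>I. q (xs i)) = q (xs j) * (\<Prod>i\<in>I - {j}. q (xs i))" for xs
    using assms(2,3) by (rule prod.remove)
  ultimately have "(\<Prod>i\<in>I. q (xs i)) * g (xs j) = (\<Prod>i\<in>I. h i (xs i))" for xs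
    by (simp add: mult_ac)
  then have "(\<integral>\<^sup>+xs. (\<Prod>i\<in>I. q (xs i)) * g (xs j) \<partial>Pi\<^sub>M I (\<lambda>_. MX))
      = (\<integral>\<^sup>+xs. (\<Prod>i\<in>I. h i (xs i)) \<partial>Pi\<^sub>M I (\<lambda>_. MX))"
    by simp
  also have "\<dots> = (\<Prod>i\<in>I. \<integral>\<^sup>+x. h i x \<partial>MX)"
    using assms by (intro product_nn_integral_prod) (auto simp: h_def)
  also have "\<dots> = (\<integral>\<^sup>+x. q x * g x \<partial>MX)"
    using assms(2,3) q by (simp add: h_def prod.remove[of I j])
  finally show ?thesis .
qed

lemma integral_test_diff_le_L1:
  fixes W0 W1 f :: "'a \<Rightarrow> real"
  assumes W0: "integrable S W0" and W1: "integrable S W1"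
    and same_mass: "integral\<^sup>L S W0 = integral\<^sup>L S W1"
    and f: "f \<in> borel_measurable S" "\<And>t. t \<in> space S \<Longrightarrow> 0 \<le> f t \<and> f t \<le> 1"
  shows "2 * ((\<integral>t. W0 t * f t \<partial>S) - (\<integral>t. W1 t * f t \<partial>S)) \<le> (\<integral>t. \<bar>W0 t - W1 t\<bar> \<partial>S)"
proof -
  have integrable_mult_f: "integrable S (\<lambda>t. W t * f t)" if "integrable S W" for W
    by (rule Bochner_Integration.integrable_bound[OF that])
      (use f that in \<open>auto simp: abs_mult intro!: mult_left_le\<close>)
  have pointwise: "2 * (W0 t * f t) - 2 * (W1 t * f t) \<le> \<bar>W0 t - W1 t\<bar> + (W0 t - W1 t)"
    if "t \<in> space S" for t
  proof -
    have "(W0 t - W1 t) * f t \<le> max 0 (W0 t - W1 t)"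
      using f(2)[OF that] by (cases "W0 t \<le> W1 t") (auto simp: mult_nonpos_nonneg mult_left_le)
    then show ?thesis by (simp add: left_diff_distrib)
  qed
  have "2 * ((\<integral>t. W0 t * f t \<partial>S) - (\<integral>t. W1 t * f t \<partial>S)) = (\<integral>t. 2 * (W0 t * f t) - 2 * (W1 t * f t) \<partial>S)"
    using integrable_mult_f[OF W0] integrable_mult_f[OF W1] by simp
  also have "\<dots> \<le> (\<integral>t. \<bar>W0 t - W1 t\<bar> + (W0 t - W1 t) \<partial>S)"
    using pointwise integrable_mult_f[OF W0] integrable_mult_f[OF W1] W0 W1 by (intro integral_mono) auto
  also have "\<dots> = (\<integral>t. \<bar>W0 t - W1 t\<bar> \<partial>S)"
    using W0 W1 same_mass by simp
  finally show ?thesis .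
qed

lemma (in prob_space) distributed_real_density_integral:
  assumes X: "distributed M N X (\<lambda>x. ennreal (p x))" and p: "\<And>x. x \<in> space N \<Longrightarrow> 0 \<le> p x"
  shows "integrable N p" and "integral\<^sup>L N p = 1"
  using distributed_integrable[OF X, of "\<lambda>_. 1"] distributed_integral[OF X, of "\<lambda>_. 1"] p
  by (simp_all add: prob_space)

locale conditional_resampling =
  prob_space M + MX: sigma_finite_measure MX + MY: sigma_finite_measure MY
    + MZ: sigma_finite_measure MZ
  for M :: "'a measure" and MX :: "'x measure" and MY :: "'y measure" and MZ :: "'z measure" +
  fixes pz :: "'z \<Rightarrow> real" and px :: "'z \<Rightarrow> 'x \<Rightarrow> real" and py :: "'x \<Rightarrow> 'z \<Rightarrow> 'y \<Rightarrow> real"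
    and X0 :: "'a \<Rightarrow> 'x" and Y :: "'a \<Rightarrow> 'y" and Z :: "'a \<Rightarrow> 'z"
    and Xs :: "'a \<Rightarrow> nat \<Rightarrow> 'x" and J :: nat
  assumes pz_measurable[measurable]: "pz \<in> borel_measurable MZ"
    and pz_nonneg: "\<And>z. z \<in> space MZ \<Longrightarrow> pz z \<ge> 0"
    and px_measurable[measurable]: "(\<lambda>(z, x). px z x) \<in> borel_measurable (MZ \<Otimes>\<^sub>M MX)"
    and px_nonneg: "\<And>z x. z \<in> space MZ \<Longrightarrow> x \<in> space MX \<Longrightarrow> px z x \<ge> 0"
    and px_norm: "\<And>z. z \<in> space MZ \<Longrightarrow> (\<integral>\<^sup>+ x. ennreal (px z x) \<partial>MX) = 1"
    and py_measurable: "(\<lambda>(x, z, y). py x z y) \<in> borel_measurable (MX \<Otimes>\<^sub>M MZ \<Otimes>\<^sub>M MY)"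
    and py_nonneg: "\<And>x z y. x \<in> space MX \<Longrightarrow> z \<in> space MZ \<Longrightarrow> y \<in> space MY \<Longrightarrow> py x z y \<ge> 0"
    and joint: "distributed M ((MX \<Otimes>\<^sub>M MY \<Otimes>\<^sub>M MZ) \<Otimes>\<^sub>M (\<Pi>\<^sub>M j\<in>{1..J}. MX))
        (\<lambda>\<omega>. ((X0 \<omega>, Y \<omega>, Z \<omega>), Xs \<omega>))
        (\<lambda>((x0, y, z), xs). ennreal (pz z * px z x0 * py x0 z y * (\<Prod>j\<in>{1..J}. px z (xs j))))"
begin

lemma py_measurable_compose[measurable]:
  assumes "a \<in> N \<rightarrow>\<^sub>M MX" "b \<in> N \<rightarrow>\<^sub>M MZ" "c \<in> N \<rightarrow>\<^sub>M MY"
  shows "(\<lambda>t. py (a t) (b t) (c t)) \<in> borel_measurable N"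
  using measurable_compose[OF measurable_Pair[OF assms(1) measurable_Pair[OF assms(2,3)]] py_measurable]
  by simp

lemma marg_y_given_z_measurable[measurable]:
  "(\<lambda>(z, y). marg_y_given_z MX px py z y) \<in> borel_measurable (MZ \<Otimes>\<^sub>M MY)"
  unfolding marg_y_given_z_def by measurable

lemma marg_y_given_z_nonneg:
  "z \<in> space MZ \<Longrightarrow> y \<in> space MY \<Longrightarrow> 0 \<le> marg_y_given_z MX px py z y"
  unfolding marg_y_given_z_def by (rule integral_nonneg_AE) (simp add: px_nonneg py_nonneg)

definition joint_density :: "'x \<times> 'y \<times> 'z \<Rightarrow> real" where
  "joint_density = (\<lambda>(x, y, z). pz z * px z x * py x z y)"

definition resampled_density :: "'x \<times> 'y \<times> 'z \<Rightarrow> real" where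
  "resampled_density = (\<lambda>(x, y, z). pz z * px z x * marg_y_given_z MX px py z y)"

lemma joint_density_measurable[measurable]:
  "joint_density \<in> borel_measurable (MX \<Otimes>\<^sub>M MY \<Otimes>\<^sub>M MZ)"
  unfolding joint_density_def by measurable

lemma resampled_density_measurable[measurable]:
  "resampled_density \<in> borel_measurable (MX \<Otimes>\<^sub>M MY \<Otimes>\<^sub>M MZ)"
  unfolding resampled_density_def by measurable

lemma joint_density_nonneg: "t \<in> space (MX \<Otimes>\<^sub>M MY \<Otimes>\<^sub>M MZ) \<Longrightarrow> 0 \<le> joint_density t"
  by (auto simp: joint_density_def space_pair_measure pz_nonneg px_nonneg py_nonneg)

lemma resampled_density_nonneg: "t \<in> space (MX \<Otimes>\<^sub>M MY \<Otimes>\<^sub>M MZ) \<Longrightarrow> 0 \<le> resampled_density t"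
  by (auto simp: resampled_density_def space_pair_measure pz_nonneg px_nonneg marg_y_given_z_nonneg)

lemma joint_measurable[measurable]:
  "(\<lambda>\<omega>. ((X0 \<omega>, Y \<omega>, Z \<omega>), Xs \<omega>)) \<in> M \<rightarrow>\<^sub>M (MX \<Otimes>\<^sub>M MY \<Otimes>\<^sub>M MZ) \<Otimes>\<^sub>M (\<Pi>\<^sub>M j\<in>{1..J}. MX)"
  using joint by (rule distributed_measurable)

lemma distributed_joint_factorized:
  "distributed M ((MX \<Otimes>\<^sub>M MY \<Otimes>\<^sub>M MZ) \<Otimes>\<^sub>M (\<Pi>\<^sub>M j\<in>{1..J}. MX))
    (\<lambda>\<omega>. ((X0 \<omega>, Y \<omega>, Z \<omega>), Xs \<omega>))
    (\<lambda>(t, xs). ennreal (joint_density t) * (\<Prod>j\<in>{1..J}. ennreal (px (snd (snd t)) (xs j))))"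
proof (subst distributed_cong_density[symmetric])
  have "ennreal (pz z * px z x * py x z y * (\<Prod>j\<in>{1..J}. px z (xs j))) =
      ennreal (joint_density (x, y, z)) * (\<Prod>j\<in>{1..J}. ennreal (px z (xs j)))"
    if "(x, y, z) \<in> space (MX \<Otimes>\<^sub>M MY \<Otimes>\<^sub>M MZ)" "xs \<in> space (\<Pi>\<^sub>M j\<in>{1..J}. MX)" for x y z xs
  proof -
    have "0 \<le> px z (xs j)" if "j \<in> {1..J}" for j
      using that \<open>(x, y, z) \<in> _\<close> \<open>xs \<in> _\<close> by (auto simp: space_pair_measure space_PiM PiE_iff px_nonneg)
    then have "(\<Prod>j\<in>{1..J}. ennreal (px z (xs j))) = ennreal (\<Prod>j\<in>{1..J}. px z (xs j))"
      by (rule prod_ennreal)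
    with joint_density_nonneg[OF that(1)] show ?thesis
      by (simp add: joint_density_def ennreal_mult')
  qed
  then show "AE p in (MX \<Otimes>\<^sub>M MY \<Otimes>\<^sub>M MZ) \<Otimes>\<^sub>M (\<Pi>\<^sub>M j\<in>{1..J}. MX).
      (\<lambda>((x0, y, z), xs). ennreal (pz z * px z x0 * py x0 z y * (\<Prod>j\<in>{1..J}. px z (xs j)))) p =
      (\<lambda>(t, xs). ennreal (joint_density t) * (\<Prod>j\<in>{1..J}. ennreal (px (snd (snd t)) (xs j)))) p"
    by (intro AE_I2) (auto simp: space_pair_measure)
qed (use joint distributed_borel_measurable[OF joint] in measurable)

lemma nn_integral_joint:
  assumes [measurable]: "H \<in> borel_measurable ((MX \<Otimes>\<^sub>M MY \<Otimes>\<^sub>M MZ) \<Otimes>\<^sub>M (\<Pi>\<^sub>M j\<in>{1..J}. MX))"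
  shows "(\<integral>\<^sup>+\<omega>. H ((X0 \<omega>, Y \<omega>, Z \<omega>), Xs \<omega>) \<partial>M) =
    (\<integral>\<^sup>+t. ennreal (joint_density t) *
      (\<integral>\<^sup>+xs. (\<Prod>j\<in>{1..J}. ennreal (px (snd (snd t)) (xs j))) * H (t, xs) \<partial>(\<Pi>\<^sub>M j\<in>{1..J}. MX))
      \<partial>(MX \<Otimes>\<^sub>M MY \<Otimes>\<^sub>M MZ))" (is "_ = ?rhs")
proof -
  interpret PX: product_sigma_finite "\<lambda>_. MX"
    by (simp add: product_sigma_finite_def MX.sigma_finite_measure_axioms)
  interpret P: sigma_finite_measure "\<Pi>\<^sub>M j\<in>{1..J}. MX"
    by (rule PX.sigma_finite) simp
  have "(\<integral>\<^sup>+\<omega>. H ((X0 \<omega>, Y \<omega>, Z \<omega>), Xs \<omega>) \<partial>M) =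
    (\<integral>\<^sup>+(t, xs). ennreal (joint_density t) * (\<Prod>j\<in>{1..J}. ennreal (px (snd (snd t)) (xs j))) * H (t, xs)
      \<partial>((MX \<Otimes>\<^sub>M MY \<Otimes>\<^sub>M MZ) \<Otimes>\<^sub>M (\<Pi>\<^sub>M j\<in>{1..J}. MX)))"
    using distributed_nn_integral[OF distributed_joint_factorized, of H] assms
    by (simp add: case_prod_beta')
  also have "\<dots> = (\<integral>\<^sup>+t. \<integral>\<^sup>+xs. ennreal (joint_density t) *
      ((\<Prod>j\<in>{1..J}. ennreal (px (snd (snd t)) (xs j))) * H (t, xs)) \<partial>(\<Pi>\<^sub>M j\<in>{1..J}. MX)
      \<partial>(MX \<Otimes>\<^sub>M MY \<Otimes>\<^sub>M MZ))"
    by (subst P.nn_integral_fst[symmetric]) (measurable, simp add: mult.assoc)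
  also have "\<dots> = ?rhs"
    by (intro nn_integral_cong nn_integral_cmult) measurable
  finally show ?thesis .
qed

lemma distributed_X0YZ:
  "distributed M (MX \<Otimes>\<^sub>M MY \<Otimes>\<^sub>M MZ) (\<lambda>\<omega>. (X0 \<omega>, Y \<omega>, Z \<omega>)) (\<lambda>t. ennreal (joint_density t))"
proof (rule distributedI_nn_integral)
  fix g :: "'x \<times> 'y \<times> 'z \<Rightarrow> ennreal"
  assume [measurable]: "g \<in> borel_measurable (MX \<Otimes>\<^sub>M MY \<Otimes>\<^sub>M MZ)"
  have "(\<integral>\<^sup>+\<omega>. g (X0 \<omega>, Y \<omega>, Z \<omega>) \<partial>M) = (\<integral>\<^sup>+t. ennreal (joint_density t) *
      (\<integral>\<^sup>+xs. (\<Prod>j\<in>{1..J}. ennreal (px (snd (snd t)) (xs j))) * g t \<partial>(\<Pi>\<^sub>M j\<in>{1..J}. MX))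
      \<partial>(MX \<Otimes>\<^sub>M MY \<Otimes>\<^sub>M MZ))"
    using nn_integral_joint[of "\<lambda>p. g (fst p)"] by simp
  also have "\<dots> = (\<integral>\<^sup>+t. ennreal (joint_density t) * g t \<partial>(MX \<Otimes>\<^sub>M MY \<Otimes>\<^sub>M MZ))"
  proof (intro nn_integral_cong)
    fix t assume "t \<in> space (MX \<Otimes>\<^sub>M MY \<Otimes>\<^sub>M MZ)"
    then have z: "snd (snd t) \<in> space MZ" by (auto simp: space_pair_measure)
    have "(\<integral>\<^sup>+xs. (\<Prod>j\<in>{1..J}. ennreal (px (snd (snd t)) (xs j))) \<partial>(\<Pi>\<^sub>M j\<in>{1..J}. MX)) = 1"
      using z px_norm by (intro nn_integral_PiM_prod_density MX.sigma_finite_measure_axioms) auto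
    with z show "ennreal (joint_density t) *
        (\<integral>\<^sup>+xs. (\<Prod>j\<in>{1..J}. ennreal (px (snd (snd t)) (xs j))) * g t \<partial>(\<Pi>\<^sub>M j\<in>{1..J}. MX)) =
        ennreal (joint_density t) * g t"
      by (simp add: nn_integral_multc)
  qed
  finally show "(\<integral>\<^sup>+\<omega>. g (X0 \<omega>, Y \<omega>, Z \<omega>) \<partial>M) = (\<integral>\<^sup>+t. ennreal (joint_density t) * g t \<partial>(MX \<Otimes>\<^sub>M MY \<Otimes>\<^sub>M MZ))" .
qed measurable

lemma nn_integral_resampled_component:
  fixes g :: "'x \<times> 'y \<times> 'z \<Rightarrow> ennreal"
  assumes j: "j \<in> {1..J}" and g[measurable]: "g \<in> borel_measurable (MX \<Otimes>\<^sub>M MY \<Otimes>\<^sub>M MZ)"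
  shows "(\<integral>\<^sup>+\<omega>. g (Xs \<omega> j, Y \<omega>, Z \<omega>) \<partial>M) =
    (\<integral>\<^sup>+\<omega>. \<integral>\<^sup>+x. ennreal (px (Z \<omega>) x) * g (x, Y \<omega>, Z \<omega>) \<partial>MX \<partial>M)"
proof -
  define C :: "'x \<times> 'y \<times> 'z \<Rightarrow> ennreal"
    where "C t = (\<integral>\<^sup>+x. ennreal (px (snd (snd t)) x) * g (x, snd t) \<partial>MX)" for t
  have [measurable]: "C \<in> borel_measurable (MX \<Otimes>\<^sub>M MY \<Otimes>\<^sub>M MZ)"
    unfolding C_def by measurable
  have "(\<integral>\<^sup>+\<omega>. g (Xs \<omega> j, Y \<omega>, Z \<omega>) \<partial>M) = (\<integral>\<^sup>+t. ennreal (joint_density t) *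
      (\<integral>\<^sup>+xs. (\<Prod>j\<in>{1..J}. ennreal (px (snd (snd t)) (xs j))) * g (xs j, snd t) \<partial>(\<Pi>\<^sub>M j\<in>{1..J}. MX))
      \<partial>(MX \<Otimes>\<^sub>M MY \<Otimes>\<^sub>M MZ))"
    using nn_integral_joint[of "\<lambda>p. g (snd p j, snd (fst p))"] j by simp
  also have "\<dots> = (\<integral>\<^sup>+t. ennreal (joint_density t) * C t \<partial>(MX \<Otimes>\<^sub>M MY \<Otimes>\<^sub>M MZ))"
  proof (intro nn_integral_cong)
    fix t assume "t \<in> space (MX \<Otimes>\<^sub>M MY \<Otimes>\<^sub>M MZ)"
    then have "snd t \<in> space (MY \<Otimes>\<^sub>M MZ)" "snd (snd t) \<in> space MZ"
      by (auto simp: space_pair_measure)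
    then have "(\<integral>\<^sup>+xs. (\<Prod>j\<in>{1..J}. ennreal (px (snd (snd t)) (xs j))) * g (xs j, snd t) \<partial>(\<Pi>\<^sub>M j\<in>{1..J}. MX)) = C t"
      unfolding C_def using j px_norm
      by (intro nn_integral_PiM_prod_density_component MX.sigma_finite_measure_axioms) auto
    then show "ennreal (joint_density t) *
        (\<integral>\<^sup>+xs. (\<Prod>j\<in>{1..J}. ennreal (px (snd (snd t)) (xs j))) * g (xs j, snd t) \<partial>(\<Pi>\<^sub>M j\<in>{1..J}. MX)) =
        ennreal (joint_density t) * C t"
      by simp
  qed
  also have "\<dots> = (\<integral>\<^sup>+\<omega>. C (X0 \<omega>, Y \<omega>, Z \<omega>) \<partial>M)"
    by (rule distributed_nn_integral[OF distributed_X0YZ]) measurable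
  finally show ?thesis by (simp add: C_def)
qed

lemma distributed_YZ:
  "distributed M (MY \<Otimes>\<^sub>M MZ) (\<lambda>\<omega>. (Y \<omega>, Z \<omega>))
    (\<lambda>(y, z). ennreal (pz z * marg_y_given_z MX px py z y))"
proof -
  interpret YZ: sigma_finite_measure "MY \<Otimes>\<^sub>M MZ"
    by (rule sigma_finite_pair_measure) standard+
  define I where "I yz = (\<integral>\<^sup>+x. ennreal (joint_density (x, yz)) \<partial>MX)" for yz
  have [measurable]: "I \<in> borel_measurable (MY \<Otimes>\<^sub>M MZ)"
    unfolding I_def by measurable
  have marginal: "distributed M (MY \<Otimes>\<^sub>M MZ) (\<lambda>\<omega>. (Y \<omega>, Z \<omega>)) I"
    unfolding I_def
    by (rule distr_marginal2[OF MX.sigma_finite_measure_axioms YZ.sigma_finite_measure_axioms distributed_X0YZ])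
  (* marg_y_given_z is a Bochner integral, so it agrees with the integral of p(x|z) p(y|x,z)
     only where the latter is finite; I has mass 1, hence is finite almost everywhere. *)
  have "(\<integral>\<^sup>+yz. I yz \<partial>(MY \<Otimes>\<^sub>M MZ)) = 1"
    using distributed_nn_integral[OF marginal, of "\<lambda>_. 1"] by (simp add: emeasure_space_1)
  then have "AE yz in MY \<Otimes>\<^sub>M MZ. I yz \<noteq> \<infinity>"
    by (intro nn_integral_PInf_AE) auto
  then have "AE yz in MY \<Otimes>\<^sub>M MZ. I yz = (\<lambda>(y, z). ennreal (pz z * marg_y_given_z MX px py z y)) yz"
  proof (rule AE_mp, intro AE_I2 impI)
    fix yz assume yz: "yz \<in> space (MY \<Otimes>\<^sub>M MZ)" and "I yz \<noteq> \<infinity>"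
    then obtain r where r: "I yz = ennreal r" by (cases "I yz") auto
    obtain y z where yz_eq: "yz = (y, z)" by (cases yz)
    have nonneg: "0 \<le> joint_density (x, yz)" if "x \<in> space MX" for x
      using that yz by (intro joint_density_nonneg) (simp add: space_pair_measure)
    have integrable: "integrable MX (\<lambda>x. joint_density (x, yz))"
      using r nonneg yz by (intro integrableI_nn_integral_finite[where x=r]) (auto simp: I_def)
    have "I yz = ennreal (\<integral>x. joint_density (x, yz) \<partial>MX)"
      unfolding I_def using integrable nonneg by (intro nn_integral_eq_integral) auto
    also have "(\<integral>x. joint_density (x, yz) \<partial>MX) = pz z * marg_y_given_z MX px py z y"
      by (simp add: yz_eq joint_density_def marg_y_given_z_def mult_ac flip: integral_mult_right_zero)
    finally show "I yz = (\<lambda>(y, z). ennreal (pz z * marg_y_given_z MX px py z y)) yz"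
      by (simp add: yz_eq)
  qed
  with marginal show ?thesis
    by (subst (asm) distributed_cong_density) measurable
qed

lemma distributed_XjYZ:
  assumes j: "j \<in> {1..J}"
  shows "distributed M (MX \<Otimes>\<^sub>M MY \<Otimes>\<^sub>M MZ) (\<lambda>\<omega>. (Xs \<omega> j, Y \<omega>, Z \<omega>))
    (\<lambda>t. ennreal (resampled_density t))"
proof (rule distributedI_nn_integral)
  interpret YZ: sigma_finite_measure "MY \<Otimes>\<^sub>M MZ"
    by (rule sigma_finite_pair_measure) standard+
  interpret pair_sigma_finite MX "MY \<Otimes>\<^sub>M MZ" ..
  fix g :: "'x \<times> 'y \<times> 'z \<Rightarrow> ennreal"
  assume [measurable]: "g \<in> borel_measurable (MX \<Otimes>\<^sub>M MY \<Otimes>\<^sub>M MZ)"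
  have "(\<integral>\<^sup>+\<omega>. g (Xs \<omega> j, Y \<omega>, Z \<omega>) \<partial>M) =
      (\<integral>\<^sup>+\<omega>. \<integral>\<^sup>+x. ennreal (px (Z \<omega>) x) * g (x, Y \<omega>, Z \<omega>) \<partial>MX \<partial>M)"
    using j by (rule nn_integral_resampled_component) measurable
  also have "\<dots> = (\<integral>\<^sup>+(y, z). ennreal (pz z * marg_y_given_z MX px py z y) *
      (\<integral>\<^sup>+x. ennreal (px z x) * g (x, y, z) \<partial>MX) \<partial>(MY \<Otimes>\<^sub>M MZ))"
  proof -
    have "(\<lambda>(y, z). \<integral>\<^sup>+x. ennreal (px z x) * g (x, y, z) \<partial>MX) \<in> borel_measurable (MY \<Otimes>\<^sub>M MZ)"
      by measurable
    from distributed_nn_integral[OF distributed_YZ this] show ?thesis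
      by (simp add: case_prod_beta')
  qed
  also have "\<dots> = (\<integral>\<^sup>+(y, z). \<integral>\<^sup>+x. ennreal (resampled_density (x, y, z)) * g (x, y, z) \<partial>MX \<partial>(MY \<Otimes>\<^sub>M MZ))"
  proof (intro nn_integral_cong, clarify)
    fix y z assume "(y, z) \<in> space (MY \<Otimes>\<^sub>M MZ)"
    then have y: "y \<in> space MY" and z: "z \<in> space MZ" by (auto simp: space_pair_measure)
    have "ennreal (resampled_density (x, y, z)) = ennreal (pz z * marg_y_given_z MX px py z y) * ennreal (px z x)"
      if "x \<in> space MX" for x
      using that y z
      by (simp add: resampled_density_def ennreal_mult pz_nonneg px_nonneg marg_y_given_z_nonneg mult_ac)
    moreover have "(\<lambda>x. ennreal (px z x) * g (x, y, z)) \<in> borel_measurable MX"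
      using y z by measurable
    ultimately show "ennreal (pz z * marg_y_given_z MX px py z y) * (\<integral>\<^sup>+x. ennreal (px z x) * g (x, y, z) \<partial>MX) =
        (\<integral>\<^sup>+x. ennreal (resampled_density (x, y, z)) * g (x, y, z) \<partial>MX)"
      by (simp add: nn_integral_cmult[symmetric] mult.assoc cong: nn_integral_cong)
  qed
  also have "\<dots> = (\<integral>\<^sup>+t. ennreal (resampled_density t) * g t \<partial>(MX \<Otimes>\<^sub>M MY \<Otimes>\<^sub>M MZ))"
    using nn_integral_snd[of "\<lambda>t. ennreal (resampled_density t) * g t"] by (simp add: case_prod_beta')
  finally show "(\<integral>\<^sup>+\<omega>. g (Xs \<omega> j, Y \<omega>, Z \<omega>) \<partial>M) =
      (\<integral>\<^sup>+t. ennreal (resampled_density t) * g t \<partial>(MX \<Otimes>\<^sub>M MY \<Otimes>\<^sub>M MZ))" .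
qed (use j in measurable)

lemma abs_joint_minus_resampled_density:
  assumes "(x, y, z) \<in> space (MX \<Otimes>\<^sub>M MY \<Otimes>\<^sub>M MZ)"
  shows "\<bar>joint_density (x, y, z) - resampled_density (x, y, z)\<bar>
    = \<bar>py x z y - marg_y_given_z MX px py z y\<bar> * px z x * pz z"
proof -
  have "0 \<le> px z x * pz z"
    using assms by (auto simp: space_pair_measure px_nonneg pz_nonneg)
  moreover have "joint_density (x, y, z) - resampled_density (x, y, z)
      = (py x z y - marg_y_given_z MX px py z y) * (px z x * pz z)"
    by (simp add: joint_density_def resampled_density_def algebra_simps)
  ultimately show ?thesis
    by (simp add: abs_mult_pos mult.assoc)
qed

lemma integral_resampling_statistic:
  assumes J: "1 \<le> J" and f[measurable]: "f \<in> borel_measurable (MX \<Otimes>\<^sub>M MY \<Otimes>\<^sub>M MZ)"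
    and f_range: "\<And>t. t \<in> space (MX \<Otimes>\<^sub>M MY \<Otimes>\<^sub>M MZ) \<Longrightarrow> 0 \<le> f t \<and> f t \<le> 1"
  shows "(\<integral>\<omega>. 1 - f (X0 \<omega>, Y \<omega>, Z \<omega>) + 1 / real J * (\<Sum>j=1..J. f (Xs \<omega> j, Y \<omega>, Z \<omega>)) \<partial>M) =
    1 - (\<integral>t. joint_density t * f t \<partial>(MX \<Otimes>\<^sub>M MY \<Otimes>\<^sub>M MZ))
      + (\<integral>t. resampled_density t * f t \<partial>(MX \<Otimes>\<^sub>M MY \<Otimes>\<^sub>M MZ))"
proof -
  have bounded: "integrable M (\<lambda>\<omega>. f (V \<omega>))" if [measurable]: "V \<in> M \<rightarrow>\<^sub>M MX \<Otimes>\<^sub>M MY \<Otimes>\<^sub>M MZ" for V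
    by (rule integrable_const_bound[where B=1]) (use f_range measurable_space[OF that] in auto)
  have int0: "integrable M (\<lambda>\<omega>. f (X0 \<omega>, Y \<omega>, Z \<omega>))"
    by (rule bounded) measurable
  have intj: "integrable M (\<lambda>\<omega>. f (Xs \<omega> j, Y \<omega>, Z \<omega>))" if "j \<in> {1..J}" for j
    using that by (intro bounded) measurable
  have X0: "(\<integral>\<omega>. f (X0 \<omega>, Y \<omega>, Z \<omega>) \<partial>M) = (\<integral>t. joint_density t * f t \<partial>(MX \<Otimes>\<^sub>M MY \<Otimes>\<^sub>M MZ))"
    by (rule distributed_integral[OF distributed_X0YZ f, symmetric]) (rule joint_density_nonneg)
  have Xj: "(\<integral>\<omega>. f (Xs \<omega> j, Y \<omega>, Z \<omega>) \<partial>M) = (\<integral>t. resampled_density t * f t \<partial>(MX \<Otimes>\<^sub>M MY \<Otimes>\<^sub>M MZ))"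
    if "j \<in> {1..J}" for j
    by (rule distributed_integral[OF distributed_XjYZ[OF that] f, symmetric]) (rule resampled_density_nonneg)
  have "(\<integral>\<omega>. 1 - f (X0 \<omega>, Y \<omega>, Z \<omega>) + 1 / real J * (\<Sum>j=1..J. f (Xs \<omega> j, Y \<omega>, Z \<omega>)) \<partial>M) =
      (\<integral>\<omega>. 1 - f (X0 \<omega>, Y \<omega>, Z \<omega>) \<partial>M) + (\<integral>\<omega>. 1 / real J * (\<Sum>j=1..J. f (Xs \<omega> j, Y \<omega>, Z \<omega>)) \<partial>M)"
    using int0 intj
    by (intro Bochner_Integration.integral_add Bochner_Integration.integrable_diff
        integrable_mult_right Bochner_Integration.integrable_sum) auto
  also have "\<dots> = 1 - (\<integral>\<omega>. f (X0 \<omega>, Y \<omega>, Z \<omega>) \<partial>M) + 1 / real J * (\<Sum>j=1..J. \<integral>\<omega>. f (Xs \<omega> j, Y \<omega>, Z \<omega>) \<partial>M)"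
    using int0 intj by (simp add: Bochner_Integration.integral_sum prob_space)
  also have "\<dots> = 1 - (\<integral>t. joint_density t * f t \<partial>(MX \<Otimes>\<^sub>M MY \<Otimes>\<^sub>M MZ))
      + (\<integral>t. resampled_density t * f t \<partial>(MX \<Otimes>\<^sub>M MY \<Otimes>\<^sub>M MZ))"
    using J by (simp add: X0 Xj)
  finally show ?thesis .
qed

end

theorem corollary1:
  fixes M :: "'a measure"
    and MX :: "'x measure" and MY :: "'y measure" and MZ :: "'z measure"
    and pz :: "'z \<Rightarrow> real"
    and px :: "'z \<Rightarrow> 'x \<Rightarrow> real"
    and py :: "'x \<Rightarrow> 'z \<Rightarrow> 'y \<Rightarrow> real"
    and X0 :: "'a \<Rightarrow> 'x" and Y :: "'a \<Rightarrow> 'y" and Z :: "'a \<Rightarrow> 'z"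
    and Xs :: "'a \<Rightarrow> nat \<Rightarrow> 'x"
    and J :: nat
    and f :: "'x \<times> 'y \<times> 'z \<Rightarrow> real"
  assumes J: "J \<ge> 1"
    and M: "prob_space M"
    and sfX: "sigma_finite_measure MX" and sfY: "sigma_finite_measure MY"
    and sfZ: "sigma_finite_measure MZ"
    (* p(z) is a probability density on Z *)
    and pz_meas: "pz \<in> borel_measurable MZ"
    and pz_nonneg: "\<And>z. z \<in> space MZ \<Longrightarrow> pz z \<ge> 0"
    and pz_norm: "(\<integral>\<^sup>+ z. ennreal (pz z) \<partial>MZ) = 1"
    (* p(x|z) is a conditional density *)
    and px_meas: "(\<lambda>(z, x). px z x) \<in> borel_measurable (MZ \<Otimes>\<^sub>M MX)"
    and px_nonneg: "\<And>z x. z \<in> space MZ \<Longrightarrow> x \<in> space MX \<Longrightarrow> px z x \<ge> 0"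
    and px_norm: "\<And>z. z \<in> space MZ \<Longrightarrow> (\<integral>\<^sup>+ x. ennreal (px z x) \<partial>MX) = 1"
    (* p(y|x,z) is a conditional density *)
    and py_meas: "(\<lambda>(x, z, y). py x z y) \<in> borel_measurable (MX \<Otimes>\<^sub>M MZ \<Otimes>\<^sub>M MY)"
    and py_nonneg: "\<And>x z y. x \<in> space MX \<Longrightarrow> z \<in> space MZ \<Longrightarrow> y \<in> space MY \<Longrightarrow> py x z y \<ge> 0"
    and py_norm: "\<And>x z. x \<in> space MX \<Longrightarrow> z \<in> space MZ \<Longrightarrow> (\<integral>\<^sup>+ y. ennreal (py x z y) \<partial>MY) = 1"
    (* joint law of ((X0,Y,Z),(X1,...,XJ)):
       p(z) p(x0|z) p(y|x0,z) * prod_j p(xj|z) *)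
    and joint: "distributed M ((MX \<Otimes>\<^sub>M MY \<Otimes>\<^sub>M MZ) \<Otimes>\<^sub>M (\<Pi>\<^sub>M j\<in>{1..J}. MX))
        (\<lambda>\<omega>. ((X0 \<omega>, Y \<omega>, Z \<omega>), Xs \<omega>))
        (\<lambda>((x0, y, z), xs). ennreal (pz z * px z x0 * py x0 z y * (\<Prod>j\<in>{1..J}. px z (xs j))))"
    (* the test function *)
    and f_meas: "f \<in> borel_measurable (MX \<Otimes>\<^sub>M MY \<Otimes>\<^sub>M MZ)"
    and f_range: "\<And>t. t \<in> space (MX \<Otimes>\<^sub>M MY \<Otimes>\<^sub>M MZ) \<Longrightarrow> 0 \<le> f t \<and> f t \<le> 1"
  shows "2 * (1 - (\<integral>\<omega>. (1 - f (X0 \<omega>, Y \<omega>, Z \<omega>)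
              + (1 / real J) * (\<Sum>j=1..J. f (Xs \<omega> j, Y \<omega>, Z \<omega>))) \<partial>M))
         \<le> (\<integral>(x, y, z). \<bar>py x z y - marg_y_given_z MX px py z y\<bar> * px z x * pz z
              \<partial>(MX \<Otimes>\<^sub>M MY \<Otimes>\<^sub>M MZ))"
proof -
  interpret conditional_resampling M MX MY MZ pz px py X0 Y Z Xs J
    using M sfX sfY sfZ pz_meas pz_nonneg px_meas px_nonneg px_norm py_meas py_nonneg joint
    by (simp add: conditional_resampling_def conditional_resampling_axioms_def)
  note joint_mass = distributed_real_density_integral[OF distributed_X0YZ joint_density_nonneg]
  note resampled_mass = distributed_real_density_integral[OF distributed_XjYZ resampled_density_nonneg]
  have "2 * ((\<integral>t. joint_density t * f t \<partial>(MX \<Otimes>\<^sub>M MY \<Otimes>\<^sub>M MZ))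
      - (\<integral>t. resampled_density t * f t \<partial>(MX \<Otimes>\<^sub>M MY \<Otimes>\<^sub>M MZ)))
      \<le> (\<integral>t. \<bar>joint_density t - resampled_density t\<bar> \<partial>(MX \<Otimes>\<^sub>M MY \<Otimes>\<^sub>M MZ))"
    using J joint_mass resampled_mass[of 1] f_meas f_range by (intro integral_test_diff_le_L1) auto
  also have "\<dots> = (\<integral>(x, y, z). \<bar>py x z y - marg_y_given_z MX px py z y\<bar> * px z x * pz z
      \<partial>(MX \<Otimes>\<^sub>M MY \<Otimes>\<^sub>M MZ))"
    by (intro Bochner_Integration.integral_cong) (auto simp: abs_joint_minus_resampled_density)
  finally show ?thesis
    using integral_resampling_statistic[OF J f_meas f_range] by simp
qed

end
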